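(* Let $p$ be a random partition and let $\mathrm{Sh}^p$ be its $p$-Shapley value, $$\mathrm{Sh}^p_i(w)=\sum_{(T,\tau)\in\mathcal{E}(N\setminus\{i\})}\Big(p_N(\{T\cup\{i\}\}\cup\tau)\,w(T\cup\{i\},\tau)-\frac{t}{n-t}\sum_{B\in\tau\cup\{\emptyset\}}p_N(\{T\}\cup\tau_{+i\leadsto B})\,w(T,\tau_{+i\leadsto B})\Big)$$ for $N\subseteq\mathbf{U}$, $w\in\mathbb{W}(N)$, $i\in N$. Then $\mathrm{Sh}^p$ satisfies the null player property if and only if $p=p^\star$, i.e., if and only if $\mathrm{Sh}^p=\mathrm{MPW}$.
   Context: $\mathbf{U}$ is a finite set of players; cardinalities of $N,S,T,B$ are $n,s,t,b$. $\Pi(N)$ is the set of partitions of $N$ ($\Pi(\emptyset)=\{\emptyset\}$). A random partition is $p=(p_N)_{N\subseteq\mathbf{U}}$ with $p_N$ a probability distribution on $\Pi(N)$; $p^\star$ is the Ewens distribution $p^\star_N(\pi)=\frac{\prod_{B\in\pi}(b-1)!}{n!}$. $\pi_{+i\leadsto B}=(\pi\setminus\{B\})\cup\{B\cup\{i\}\}$ for $B\in\pi$, $\pi_{+i\leadsto\emptyset}=\pi\cup\{\{i\}\}$. Embedded coalitions $\mathcal{E}(N)=\{(S,\pi):S\subseteq N,\pi\in\Pi(N\setminus S)\}$; a TUX game on $N$ is $w:\mathcal{E}(N)\to\mathbb{R}$ with $w(\emptyset,\pi)=0$; $\mathbb{W}(N)$ their set. Player $i$ is a null player in $w\in\mathbb{W}(N)$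 if $w(S\cup\{i\},\pi)=w(S,\pi_{+i\leadsto B})$ for all $(S,\pi)\in\mathcal{E}(N\setminus\{i\})$ and $B\in\pi\cup\{\emptyset\}$. A solution $\varphi$ (assigning $\varphi(w)\in\mathbb{R}^N$ to every $w\in\mathbb{W}(N)$, $N\subseteq\mathbf{U}$) satisfies the null player property if $\varphi_i(w)=0$ whenever $i$ is a null player in $w$. The Shapley value of a TU game $v$ is $\mathrm{Sh}_i(v)=\sum_{S\subseteq N\setminus\{i\}}\frac{s!(n-s-1)!}{n!}(v(S\cup\{i\})-v(S))$; the MPW solution is $\mathrm{MPW}(w)=\mathrm{Sh}(\bar v^\star_w)$ with $\bar v^\star_w(S)=\sum_{\pi\in\Pi(N\setminus S)}p^\star_{N\setminus S}(\pi)w(S,\pi)$. *)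

theory Defs
  imports Complex_Main "HOL-Library.Disjoint_Sets"
begin

definition partitions :: "'a set \<Rightarrow> 'a set set set" where
  "partitions N = {P. partition_on N P}"

definition random_partition :: "'a set \<Rightarrow> ('a set \<Rightarrow> 'a set set \<Rightarrow> real) \<Rightarrow> bool" where
  "random_partition U p \<longleftrightarrow>
     (\<forall>N. N \<subseteq> U \<longrightarrow> (\<forall>\<pi>\<in>partitions N. 0 \<le> p N \<pi>) \<and> (\<Sum>\<pi>\<in>partitions N. p N \<pi>) = 1)"

definition ewens :: "'a set \<Rightarrow> 'a set set \<Rightarrow> real" where
  "ewens N \<pi> = (\<Prod>B\<in>\<pi>. fact (card B - 1)) / fact (card N)"

text \<open>pi_{+i ~> B}; B = {} means i forms a new singleton block.\<close>
definition add_to :: "'a set set \<Rightarrow> 'a \<Rightarrow> 'a set \<Rightarrow> 'a set set" where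
  "add_to \<pi> i B = (if B = {} then insert {i} \<pi> else insert (B \<union> {i}) (\<pi> - {B}))"

definition embedded :: "'a set \<Rightarrow> ('a set \<times> 'a set set) set" where
  "embedded N = {(S, \<pi>). S \<subseteq> N \<and> partition_on (N - S) \<pi>}"

text \<open>TUX games on N: functions on embedded coalitions (values outside E(N) are
  irrelevant) with w(empty, pi) = 0.\<close>
definition tux_game :: "'a set \<Rightarrow> ('a set \<Rightarrow> 'a set set \<Rightarrow> real) \<Rightarrow> bool" where
  "tux_game N w \<longleftrightarrow> (\<forall>\<pi>. partition_on N \<pi> \<longrightarrow> w {} \<pi> = 0)"

definition null_player :: "'a set \<Rightarrow> ('a set \<Rightarrow> 'a set set \<Rightarrow> real) \<Rightarrow> 'a \<Rightarrow> bool" where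
  "null_player N w i \<longleftrightarrow>
     (\<forall>(S, \<pi>)\<in>embedded (N - {i}). \<forall>B\<in>insert {} \<pi>. w (S \<union> {i}) \<pi> = w S (add_to \<pi> i B))"

definition null_player_property ::
  "'a set \<Rightarrow> ('a set \<Rightarrow> ('a set \<Rightarrow> 'a set set \<Rightarrow> real) \<Rightarrow> 'a \<Rightarrow> real) \<Rightarrow> bool" where
  "null_player_property U \<phi> \<longleftrightarrow>
     (\<forall>N w i. N \<subseteq> U \<and> tux_game N w \<and> i \<in> N \<and> null_player N w i \<longrightarrow> \<phi> N w i = 0)"

definition p_shapley ::
  "('a set \<Rightarrow> 'a set set \<Rightarrow> real) \<Rightarrow> 'a set \<Rightarrow> ('a set \<Rightarrow> 'a set set \<Rightarrow> real) \<Rightarrow> 'a \<Rightarrow> real" where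
  "p_shapley p N w i =
     (\<Sum>(T, \<tau>)\<in>embedded (N - {i}).
        p N (insert (T \<union> {i}) \<tau>) * w (T \<union> {i}) \<tau>
        - real (card T) / real (card N - card T) *
          (\<Sum>B\<in>insert {} \<tau>. p N (insert T (add_to \<tau> i B)) * w T (add_to \<tau> i B)))"

definition shapley :: "'a set \<Rightarrow> ('a set \<Rightarrow> real) \<Rightarrow> 'a \<Rightarrow> real" where
  "shapley N v i =
     (\<Sum>S\<in>Pow (N - {i}). fact (card S) * fact (card N - card S - 1) / fact (card N)
        * (v (S \<union> {i}) - v S))"

definition mpw :: "'a set \<Rightarrow> ('a set \<Rightarrow> 'a set set \<Rightarrow> real) \<Rightarrow> 'a \<Rightarrow> real" where
  "mpw N w i = shapley N (\<lambda>S. \<Sum>\<pi>\<in>partitions (N - S). ewens (N - S) \<pi> * w S \<pi>) i"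

end

(*
  If player i is null, then w(T, tau_{+i~>B}) = w(T + i, tau) for every B, so the terms of
  Sh^p_i(w) collect into the sum over (T, tau) of c_p(T, tau) * w(T + i, tau), with
  c_p(T, tau) = p_N({T + i} + tau) - t/(n - t) * sum_B p_N({T} + tau_{+i~>B});
  the terms with T = {} vanish because w({}, _) = 0. Testing indicator games shows that the
  null player property holds iff c_p(T, tau) = 0 whenever T is nonempty.

  The Ewens distribution solves these equations: adding i to a block B multiplies the Ewens
  weight prod (|B| - 1)! by |B| (by 1 for a new block), and these factors add up to n, the
  ratio of the normalisations n! and (n - 1)!.
  Conversely, the equations force p to be proportional to the Ewens distribution by a maximum
  principle: if the ratio p/p* is maximal at a partition with a block of size at least 2,
  splitting a player off that block writes both p and p* there as the same positive
  combination of their values at other partitions, so the ratio is also maximal at the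
  partition in which that player forms a singleton. Hence the maximum, and likewise the
  minimum, of the ratio is attained at the partition into singletons; the ratio is constant
  and normalisation gives p = p*. Finally, for p = p* the same block-insertion bijection
  turns the sum over tau in Sh^{p*}_i into the Shapley weight t!(n-t-1)!/n! times the
  marginal contribution of i in the Ewens-averaged game, which is the MPW solution.
*)

theory Submission
  imports Defs
begin

section \<open>Inserting a player into a partition\<close>

lemma mem_partitions_iff [simp]: "\<pi> \<in> partitions X \<longleftrightarrow> partition_on X \<pi>"
  by (simp add: partitions_def)

lemma finite_partitions: "finite X \<Longrightarrow> finite (partitions X)"
  unfolding partitions_def by (rule finitely_many_partition_on)

lemma embedded_iff [simp]: "(S, \<pi>) \<in> embedded N \<longleftrightarrow> S \<subseteq> N \<and> partition_on (N - S) \<pi>"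
  by (simp add: embedded_def)

lemma partition_on_insert_block:
  assumes "partition_on (N - A) \<sigma>" "A \<subseteq> N" "A \<noteq> {}"
  shows "partition_on N (insert A \<sigma>)"
proof -
  have "disjnt A (\<Union>\<sigma>)"
    using partition_onD1[OF assms(1)] by (auto simp: disjnt_def)
  then show ?thesis
    using assms by (simp add: partition_on_insert)
qed

lemma partition_on_remove_block:
  assumes "partition_on N \<sigma>" "A \<in> \<sigma>"
  shows "partition_on (N - A) (\<sigma> - {A})"
proof -
  have "disjnt A (\<Union>(\<sigma> - {A}))"
    using assms partition_onD2 by (fastforce simp: disjoint_def disjnt_def)
  moreover have "insert A (\<sigma> - {A}) = \<sigma>"
    using assms(2) by blast
  ultimately show ?thesis
    using assms(1) partition_on_insert by metis
qed

lemma partition_on_add_to: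
  assumes "partition_on X \<pi>" "i \<notin> X" "B \<in> insert {} \<pi>"
  shows "partition_on (insert i X) (add_to \<pi> i B)"
proof (cases "B = {}")
  case True
  have "insert i X - {i} = X"
    using assms(2) by blast
  then show ?thesis
    using True assms(1) by (simp add: add_to_def partition_on_insert_block)
next
  case False
  then have "B \<in> \<pi>"
    using assms(3) by blast
  then have "partition_on (X - B) (\<pi> - {B})" and "B \<subseteq> X"
    using assms(1) partition_on_remove_block partition_onD1 by blast+
  moreover have "insert i X - (B \<union> {i}) = X - B"
    using assms(2) by blast
  ultimately show ?thesis
    using False assms(2) partition_on_insert_block[of "insert i X" "B \<union> {i}" "\<pi> - {B}"]
    by (auto simp: add_to_def)
qed

definition remove_player :: "'a \<Rightarrow> 'a set set \<Rightarrow> 'a set set" where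
  "remove_player i \<sigma> = (\<lambda>A. A - {i}) ` \<sigma> - {{}}"

lemma remove_player_id:
  assumes "partition_on X \<pi>" "i \<notin> X"
  shows "remove_player i \<pi> = \<pi>"
proof -
  have "A - {i} = A" if "A \<in> \<pi>" for A
    using that assms partition_onD1 by fastforce
  then show ?thesis
    using partition_onD3[OF assms(1)] unfolding remove_player_def by (auto simp: image_iff)
qed

lemma remove_player_add_to:
  assumes "partition_on X \<pi>" "i \<notin> X" "B \<in> insert {} \<pi>"
  shows "remove_player i (add_to \<pi> i B) = \<pi>"
proof -
  have "A - {i} = A" if "A \<in> \<pi>" for A
    using that assms partition_onD1 by fastforce
  then show ?thesis
    using partition_onD3[OF assms(1)] assms(3)
    unfolding remove_player_def add_to_def by (auto simp: image_iff)
qed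

lemma add_to_inj:
  assumes "partition_on X \<pi>" "i \<notin> X" "B \<in> insert {} \<pi>" "B' \<in> insert {} \<pi>"
    and "add_to \<pi> i B = add_to \<pi> i B'"
  shows "B = B'"
proof -
  have "i \<notin> C" if "C \<in> insert {} \<pi>" for C
    using that assms(1,2) partition_onD1 by fastforce
  then have "C = B \<union> {i}" if "C \<in> add_to \<pi> i B'" "i \<in> C" for C
    using that assms(3-5) unfolding add_to_def by (auto split: if_splits)
  moreover have "B' \<union> {i} \<in> add_to \<pi> i B'"
    using assms(4) unfolding add_to_def by auto
  ultimately show ?thesis
    using \<open>\<And>C. C \<in> insert {} \<pi> \<Longrightarrow> i \<notin> C\<close> assms(3,4) by blast
qed

lemma ex_add_to_eq:
  assumes "partition_on (insert i X) \<sigma>" "i \<notin> X"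
  obtains \<pi> B where "partition_on X \<pi>" "B \<in> insert {} \<pi>" "\<sigma> = add_to \<pi> i B"
proof -
  obtain A where A: "A \<in> \<sigma>" "i \<in> A"
    using partition_onD1[OF assms(1)] by blast
  have rest: "partition_on (insert i X - A) (\<sigma> - {A})" and "A \<subseteq> insert i X"
    using assms(1) A(1) partition_on_remove_block partition_onD1 by blast+
  have \<sigma>: "insert A (\<sigma> - {A}) = \<sigma>"
    using A(1) by blast
  show thesis
  proof (cases "A = {i}")
    case True
    moreover have "insert i X - {i} = X"
      using assms(2) by blast
    ultimately have "partition_on X (\<sigma> - {A})"
      using rest by simp
    with True \<sigma> show thesis
      by (intro that[of "\<sigma> - {A}" "{}"]) (simp_all add: add_to_def)
  next
    case False
    have "A - {i} \<noteq> {}"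
      using False A(2) by blast
    moreover have "A - {i} \<notin> \<sigma> - {A}"
      using assms(1) A \<open>A - {i} \<noteq> {}\<close> partition_onD2
      by (fastforce simp: disjoint_def)
    moreover have "partition_on X (insert (A - {i}) (\<sigma> - {A}))"
    proof (rule partition_on_insert_block)
      have "insert i X - A = X - (A - {i})"
        using A(2) assms(2) by blast
      then show "partition_on (X - (A - {i})) (\<sigma> - {A})"
        using rest by simp
      show "A - {i} \<subseteq> X"
        using \<open>A \<subseteq> insert i X\<close> by blast
    qed fact
    ultimately show thesis
      using A(2) \<sigma>
      by (intro that[of "insert (A - {i}) (\<sigma> - {A})" "A - {i}"]) (auto simp: add_to_def insert_absorb)
  qed
qed

lemma bij_betw_add_to:
  assumes "i \<notin> X"
  shows "bij_betw (\<lambda>(\<pi>, B). add_to \<pi> i B)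
           (SIGMA \<pi>:partitions X. insert {} \<pi>) (partitions (insert i X))"
proof (rule bij_betw_imageI)
  show "inj_on (\<lambda>(\<pi>, B). add_to \<pi> i B) (SIGMA \<pi>:partitions X. insert {} \<pi>)"
  proof (rule inj_onI, clarify)
    fix \<pi> B \<pi>' B'
    assume \<pi>: "\<pi> \<in> partitions X" "B \<in> insert {} \<pi>" and \<pi>': "\<pi>' \<in> partitions X" "B' \<in> insert {} \<pi>'"
      and eq: "add_to \<pi> i B = add_to \<pi>' i B'"
    have "\<pi> = \<pi>'"
      using remove_player_add_to[of X \<pi> i B] remove_player_add_to[of X \<pi>' i B'] \<pi> \<pi>' eq assms
      by simp
    then show "\<pi> = \<pi>' \<and> B = B'"
      using add_to_inj[of X \<pi> i B B'] \<pi> \<pi>' eq assms by simp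
  qed
  show "(\<lambda>(\<pi>, B). add_to \<pi> i B) ` (SIGMA \<pi>:partitions X. insert {} \<pi>) = partitions (insert i X)"
  proof (intro equalityI subsetI)
    fix \<sigma>
    assume "\<sigma> \<in> (\<lambda>(\<pi>, B). add_to \<pi> i B) ` (SIGMA \<pi>:partitions X. insert {} \<pi>)"
    then show "\<sigma> \<in> partitions (insert i X)"
      using partition_on_add_to[OF _ assms] by auto
  next
    fix \<sigma>
    assume "\<sigma> \<in> partitions (insert i X)"
    then obtain \<pi> B where "partition_on X \<pi>" "B \<in> insert {} \<pi>" "\<sigma> = add_to \<pi> i B"
      using ex_add_to_eq[OF _ assms, of \<sigma>] by auto
    then show "\<sigma> \<in> (\<lambda>(\<pi>, B). add_to \<pi> i B) ` (SIGMA \<pi>:partitions X. insert {} \<pi>)"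
      by force
  qed
qed

lemma sum_partitions_insert:
  assumes "finite X" "i \<notin> X"
  shows "(\<Sum>\<sigma>\<in>partitions (insert i X). g \<sigma>) = (\<Sum>\<pi>\<in>partitions X. \<Sum>B\<in>insert {} \<pi>. g (add_to \<pi> i B))"
proof -
  have "(\<Sum>\<sigma>\<in>partitions (insert i X). g \<sigma>) = (\<Sum>(\<pi>, B)\<in>(SIGMA \<pi>:partitions X. insert {} \<pi>). g (add_to \<pi> i B))"
    using sum.reindex_bij_betw[OF bij_betw_add_to[OF assms(2)], of g] by (simp add: split_beta)
  also have "\<dots> = (\<Sum>\<pi>\<in>partitions X. \<Sum>B\<in>insert {} \<pi>. g (add_to \<pi> i B))"
    using assms(1) finite_partitions finite_elements by (subst sum.Sigma) auto
  finally show ?thesis .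
qed

section \<open>The Ewens distribution\<close>

lemma ewens_pos: "0 < ewens N \<pi>"
  unfolding ewens_def by (intro divide_pos_pos prod_pos) auto

lemma card_eq_sum_card_blocks:
  assumes "partition_on X \<pi>" "finite X"
  shows "card X = (\<Sum>B\<in>\<pi>. card B)"
  using sum.partition[OF assms(2,1), of "\<lambda>_. 1"] by (simp only: card_eq_sum)

lemma ewens_add_to_new_block:
  assumes "partition_on X \<pi>" "finite X" "i \<notin> X"
  shows "ewens (insert i X) (add_to \<pi> i {}) = ewens X \<pi> / (card X + 1)"
proof -
  have "{i} \<notin> \<pi>" "finite \<pi>"
    using assms finite_elements partition_onD1 by blast+
  then show ?thesis
    using assms(2,3) by (simp add: ewens_def add_to_def divide_simps)
qed

lemma ewens_add_to_block:
  assumes "partition_on X \<pi>" "finite X" "i \<notin> X" "B \<in> \<pi>"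
  shows "ewens (insert i X) (add_to \<pi> i B) = ewens X \<pi> * card B / (card X + 1)"
proof -
  define f :: "'a set \<Rightarrow> real" where "f C = fact (card C - 1)" for C
  have "B \<subseteq> X" "B \<noteq> {}"
    using assms(1,4) partition_onD1 partition_onD3 by blast+
  then have fin: "finite \<pi>" "finite B" and "i \<notin> B"
    using assms(1-3) finite_elements finite_subset by blast+
  have "B \<union> {i} \<notin> \<pi>"
    using assms(1,3) partition_onD1 by blast
  have "(\<Prod>C\<in>add_to \<pi> i B. f C) = fact (card B) * (\<Prod>C\<in>\<pi> - {B}. f C)"
    using fin \<open>B \<noteq> {}\<close> \<open>i \<notin> B\<close> \<open>B \<union> {i} \<notin> \<pi>\<close> by (simp add: add_to_def f_def)
  also have "\<dots> = card B * (\<Prod>C\<in>\<pi>. f C)"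
    using fin \<open>B \<noteq> {}\<close> assms(4) fact_reduce[of "card B", where 'a=real]
    by (simp add: prod.remove[of \<pi> B] f_def card_gt_0_iff)
  finally show ?thesis
    using assms(2,3) by (simp add: ewens_def f_def divide_simps)
qed

lemma sum_ewens_add_to:
  assumes "partition_on X \<pi>" "finite X" "i \<notin> X"
  shows "(\<Sum>B\<in>insert {} \<pi>. ewens (insert i X) (add_to \<pi> i B)) = ewens X \<pi>"
proof -
  have "(\<Sum>B\<in>insert {} \<pi>. ewens (insert i X) (add_to \<pi> i B))
      = ewens X \<pi> / (card X + 1) + (\<Sum>B\<in>\<pi>. ewens X \<pi> * card B / (card X + 1))"
  proof -
    have "finite \<pi>" "{} \<notin> \<pi>"
      using assms finite_elements partition_onD3 by blast+
    then show ?thesis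
      using assms by (simp add: ewens_add_to_new_block ewens_add_to_block)
  qed
  also have "\<dots> = ewens X \<pi> * (1 + (\<Sum>B\<in>\<pi>. card B)) / (card X + 1)"
    by (simp add: sum_divide_distrib[symmetric] sum_distrib_left[symmetric] add_divide_distrib distrib_left)
  also have "\<dots> = ewens X \<pi>"
  proof -
    have "(\<Sum>B\<in>\<pi>. real (card B)) = card X"
      using card_eq_sum_card_blocks[OF assms(1,2)] by simp
    then show ?thesis
      by (simp add: add.commute)
  qed
  finally show ?thesis .
qed

lemma sum_ewens:
  assumes "finite N"
  shows "(\<Sum>\<sigma>\<in>partitions N. ewens N \<sigma>) = 1"
  using assms
proof (induction N rule: finite_induct)
  case empty
  have "partitions ({} :: 'a set) = {{}}"
    by (auto simp: partition_on_empty)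
  then show ?case
    by (simp add: ewens_def)
next
  case (insert i X)
  then show ?case
    by (simp add: sum_partitions_insert sum_ewens_add_to)
qed

lemma ewens_insert_block:
  assumes "partition_on (N - A) \<sigma>" "finite N" "A \<subseteq> N" "A \<noteq> {}"
  shows "ewens N (insert A \<sigma>) =
           fact (card A - 1) * fact (card N - card A) / fact (card N) * ewens (N - A) \<sigma>"
proof -
  have "A \<notin> \<sigma>"
    using assms(1,4) partition_onD1 by blast
  moreover have "finite \<sigma>"
    using assms(1,2) finite_elements by blast
  ultimately show ?thesis
    using assms(2,3) by (simp add: ewens_def card_Diff_subset finite_subset)
qed

lemma fact_pred_mult_fact_diff:
  assumes "0 < t" "t < n"
  shows "real t / real (n - t) * (fact (t - 1) * fact (n - t)) = fact t * fact (n - t - 1)"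
proof -
  have "(fact t :: real) = t * fact (t - 1)" "(fact (n - t) :: real) = (n - t) * fact (n - t - 1)"
    using assms fact_reduce[of t, where 'a=real] fact_reduce[of "n - t", where 'a=real] by simp_all
  then show ?thesis
    using assms by simp
qed

lemma ewens_recursion:
  assumes "finite N" "i \<in> N" "(T, \<tau>) \<in> embedded (N - {i})" "T \<noteq> {}"
  shows "ewens N (insert (T \<union> {i}) \<tau>) =
           card T / (card N - card T) * (\<Sum>B\<in>insert {} \<tau>. ewens N (insert T (add_to \<tau> i B)))"
proof -
  define X where "X = N - {i} - T"
  have \<tau>: "partition_on X \<tau>" and T: "T \<subseteq> N - {i}"
    using assms(3) by (simp_all add: X_def)
  have fin: "finite X" "finite T" and "i \<notin> X" "i \<notin> T"
    using assms(1) T finite_subset X_def by auto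
  have X_eq: "N - (T \<union> {i}) = X" "N - T = insert i X"
    using assms(2) T X_def by auto
  have "0 < card T"
    using assms(4) fin(2) by (simp add: card_gt_0_iff)
  have "card T < card N"
    using assms(1,2) T by (intro psubset_card_mono) auto
  have lhs: "ewens N (insert (T \<union> {i}) \<tau>) = fact (card T) * fact (card N - card T - 1) / fact (card N) * ewens X \<tau>"
    using ewens_insert_block[of N "T \<union> {i}" \<tau>] assms(1,2) T \<tau> X_eq fin \<open>i \<notin> T\<close> by auto
  have "(\<Sum>B\<in>insert {} \<tau>. ewens N (insert T (add_to \<tau> i B))) =
      (\<Sum>B\<in>insert {} \<tau>. fact (card T - 1) * fact (card N - card T) / fact (card N) *
                             ewens (insert i X) (add_to \<tau> i B))"
    using ewens_insert_block[of N T] partition_on_add_to[OF \<tau> \<open>i \<notin> X\<close>]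
      assms(1,4) T X_eq by (intro sum.cong) auto
  also have "\<dots> = fact (card T - 1) * fact (card N - card T) / fact (card N) * ewens X \<tau>"
    by (simp only: sum_distrib_left[symmetric] sum_ewens_add_to[OF \<tau> fin(1) \<open>i \<notin> X\<close>])
  finally show ?thesis
    unfolding lhs fact_pred_mult_fact_diff[OF \<open>0 < card T\<close> \<open>card T < card N\<close>, symmetric]
    by (simp only: times_divide_eq_left times_divide_eq_right mult.assoc)
qed

section \<open>The p-Shapley value of a null player\<close>

lemma partition_on_insert_player_block:
  assumes "(T, \<tau>) \<in> embedded (N - {i})" "i \<in> N"
  shows "partition_on N (insert (T \<union> {i}) \<tau>)"
  using assms by (intro partition_on_insert_block) (auto simp: Diff_insert2[symmetric] Un_commute)

lemma partition_on_insert_add_to: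
  assumes "(T, \<tau>) \<in> embedded (N - {i})" "i \<in> N" "T \<noteq> {}" "B \<in> insert {} \<tau>"
  shows "partition_on N (insert T (add_to \<tau> i B))"
proof (rule partition_on_insert_block)
  have "insert i (N - {i} - T) = N - T"
    using assms(1,2) by auto
  then show "partition_on (N - T) (add_to \<tau> i B)"
    using assms(1,4) partition_on_add_to[of "N - {i} - T" \<tau> i B] by simp
qed (use assms in auto)

lemma finite_embedded: "finite N \<Longrightarrow> finite (embedded N)"
  unfolding embedded_def
  by (rule finite_subset[of _ "Pow N \<times> Pow (Pow N)"]) (auto dest: partition_onD1)

definition null_coeff ::
  "('a set \<Rightarrow> 'a set set \<Rightarrow> real) \<Rightarrow> 'a set \<Rightarrow> 'a \<Rightarrow> 'a set \<Rightarrow> 'a set set \<Rightarrow> real" where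
  "null_coeff p N i T \<tau> = p N (insert (T \<union> {i}) \<tau>)
     - card T / (card N - card T) * (\<Sum>B\<in>insert {} \<tau>. p N (insert T (add_to \<tau> i B)))"

lemma null_playerD:
  assumes "null_player N w i" "(S, \<pi>) \<in> embedded (N - {i})" "B \<in> insert {} \<pi>"
  shows "w (S \<union> {i}) \<pi> = w S (add_to \<pi> i B)"
  using bspec[OF assms(1)[unfolded null_player_def] assms(2)] assms(3) by auto

lemma p_shapley_null_player:
  assumes "null_player N w i"
  shows "p_shapley p N w i = (\<Sum>(T, \<tau>)\<in>embedded (N - {i}). null_coeff p N i T \<tau> * w (T \<union> {i}) \<tau>)"
  unfolding p_shapley_def
proof (rule sum.cong[OF refl], clarify)
  fix T \<tau>
  assume "(T, \<tau>) \<in> embedded (N - {i})"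
  then have "w T (add_to \<tau> i B) = w (T \<union> {i}) \<tau>" if "B \<in> insert {} \<tau>" for B
    using null_playerD[OF assms _ that] by simp
  then have "(\<Sum>B\<in>insert {} \<tau>. p N (insert T (add_to \<tau> i B)) * w T (add_to \<tau> i B))
      = (\<Sum>B\<in>insert {} \<tau>. p N (insert T (add_to \<tau> i B))) * w (T \<union> {i}) \<tau>"
    by (simp add: sum_distrib_right)
  then show "p N (insert (T \<union> {i}) \<tau>) * w (T \<union> {i}) \<tau> - card T / (card N - card T) *
      (\<Sum>B\<in>insert {} \<tau>. p N (insert T (add_to \<tau> i B)) * w T (add_to \<tau> i B))
      = null_coeff p N i T \<tau> * w (T \<union> {i}) \<tau>"
    by (simp add: null_coeff_def algebra_simps)
qed

lemma p_shapley_cong: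
  assumes "i \<in> N" "\<And>\<pi>. partition_on N \<pi> \<Longrightarrow> p N \<pi> = q N \<pi>"
  shows "p_shapley p N w i = p_shapley q N w i"
  unfolding p_shapley_def
proof (rule sum.cong[OF refl], clarify)
  fix T \<tau>
  assume T\<tau>: "(T, \<tau>) \<in> embedded (N - {i})"
  have "card T / (card N - card T) * (\<Sum>B\<in>insert {} \<tau>. p N (insert T (add_to \<tau> i B)) * w T (add_to \<tau> i B))
      = card T / (card N - card T) * (\<Sum>B\<in>insert {} \<tau>. q N (insert T (add_to \<tau> i B)) * w T (add_to \<tau> i B))"
  proof (cases "T = {}")
    case False
    then show ?thesis
      using assms partition_on_insert_add_to[OF T\<tau> assms(1) False] by (auto intro!: sum.cong)
  qed simp
  then show "p N (insert (T \<union> {i}) \<tau>) * w (T \<union> {i}) \<tau> - card T / (card N - card T) *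
      (\<Sum>B\<in>insert {} \<tau>. p N (insert T (add_to \<tau> i B)) * w T (add_to \<tau> i B))
    = q N (insert (T \<union> {i}) \<tau>) * w (T \<union> {i}) \<tau> - card T / (card N - card T) *
      (\<Sum>B\<in>insert {} \<tau>. q N (insert T (add_to \<tau> i B)) * w T (add_to \<tau> i B))"
    using assms partition_on_insert_player_block[OF T\<tau> assms(1)] by simp
qed

definition null_balanced :: "('a set \<Rightarrow> 'a set set \<Rightarrow> real) \<Rightarrow> 'a set \<Rightarrow> bool" where
  "null_balanced p N \<longleftrightarrow>
     (\<forall>i\<in>N. \<forall>(T, \<tau>)\<in>embedded (N - {i}). T \<noteq> {} \<longrightarrow> null_coeff p N i T \<tau> = 0)"

lemma null_balancedD:
  assumes "null_balanced p N" "i \<in> N" "(T, \<tau>) \<in> embedded (N - {i})" "T \<noteq> {}"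
  shows "null_coeff p N i T \<tau> = 0"
  using bspec[OF bspec[OF assms(1)[unfolded null_balanced_def] assms(2)] assms(3)] assms(4) by simp

lemma null_balanced_ewens: "finite N \<Longrightarrow> null_balanced ewens N"
  unfolding null_balanced_def null_coeff_def by (auto simp del: embedded_iff dest: ewens_recursion)

lemma null_player_property_if_null_balanced:
  assumes "\<And>N. N \<subseteq> U \<Longrightarrow> null_balanced p N"
  shows "null_player_property U (p_shapley p)"
  unfolding null_player_property_def
proof (intro allI impI, elim conjE)
  fix N w i
  assume "N \<subseteq> U" "tux_game N w" "i \<in> N" and null: "null_player N w i"
  have "null_coeff p N i T \<tau> * w (T \<union> {i}) \<tau> = 0" if T\<tau>: "(T, \<tau>) \<in> embedded (N - {i})" for T \<tau>
  proof (cases "T = {}")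
    case True
    text \<open>A null player alone is worth as much as the empty coalition, i.e. nothing.\<close>
    then have "w (T \<union> {i}) \<tau> = w {} (add_to \<tau> i {})"
      using null_playerD[OF null T\<tau>] by simp
    moreover have "partition_on N (add_to \<tau> i {})"
      using partition_on_add_to[of "N - {i}" \<tau> i "{}"] T\<tau> True \<open>i \<in> N\<close> by (simp add: insert_absorb)
    ultimately show ?thesis
      using \<open>tux_game N w\<close> unfolding tux_game_def by simp
  next
    case False
    then show ?thesis
      using null_balancedD[OF assms[OF \<open>N \<subseteq> U\<close>] \<open>i \<in> N\<close> T\<tau>] by simp
  qed
  then show "p_shapley p N w i = 0"
    unfolding p_shapley_null_player[OF null] by (intro sum.neutral) auto
qed

lemma null_balanced_if_null_player_property:
  assumes npp: "null_player_property U (p_shapley p)" and "N \<subseteq> U" "finite N"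
  shows "null_balanced p N"
  unfolding null_balanced_def
proof (intro ballI, clarify)
  fix i T \<tau>
  assume "i \<in> N" and T\<tau>: "(T, \<tau>) \<in> embedded (N - {i})" and "T \<noteq> {}"
  text \<open>The witness: the indicator of \<open>T\<close>, with or without \<open>i\<close>, embedded in \<open>\<tau>\<close>
    with \<open>i\<close> placed anywhere.\<close>
  define w where "w S \<sigma> = (if S - {i} = T \<and> remove_player i \<sigma> = \<tau> then 1 else 0 :: real)" for S \<sigma>
  have "tux_game N w"
    using \<open>T \<noteq> {}\<close> by (simp add: tux_game_def w_def)
  have null: "null_player N w i"
    unfolding null_player_def
  proof (clarify)
    fix S \<pi> B
    assume "(S, \<pi>) \<in> embedded (N - {i})" "B \<in> insert {} \<pi>"
    then show "w (S \<union> {i}) \<pi> = w S (add_to \<pi> i B)"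
      using remove_player_id[of "N - {i} - S" \<pi> i] remove_player_add_to[of "N - {i} - S" \<pi> i B]
      by (auto simp: w_def)
  qed
  have w_embedded: "w (T' \<union> {i}) \<tau>' = (if (T', \<tau>') = (T, \<tau>) then 1 else 0)"
    if "(T', \<tau>') \<in> embedded (N - {i})" for T' \<tau>'
    using that remove_player_id[of "N - {i} - T'" \<tau>' i] by (auto simp: w_def)
  have "0 = p_shapley p N w i"
    using npp \<open>N \<subseteq> U\<close> \<open>tux_game N w\<close> \<open>i \<in> N\<close> null unfolding null_player_property_def by simp
  also have "\<dots> = (\<Sum>x\<in>embedded (N - {i}). if x = (T, \<tau>) then null_coeff p N i T \<tau> else 0)"
    unfolding p_shapley_null_player[OF null]
  proof (rule sum.cong[OF refl], clarify)
    fix T' \<tau>'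
    assume "(T', \<tau>') \<in> embedded (N - {i})"
    then show "null_coeff p N i T' \<tau>' * w (T' \<union> {i}) \<tau>' =
        (if (T', \<tau>') = (T, \<tau>) then null_coeff p N i T \<tau> else 0)"
      using w_embedded[of T' \<tau>'] by auto
  qed
  also have "\<dots> = null_coeff p N i T \<tau>"
    using sum.delta[OF finite_embedded[of "N - {i}"], of "(T, \<tau>)"] T\<tau> \<open>finite N\<close> by simp
  finally show "null_coeff p N i T \<tau> = 0" ..
qed

section \<open>A maximum principle for the null-player equations\<close>

lemma ex_block_with_two_players:
  assumes "partition_on N \<sigma>" "\<sigma> \<noteq> (\<lambda>x. {x}) ` N"
  obtains A i where "A \<in> \<sigma>" "i \<in> A" "A - {i} \<noteq> {}"
proof -
  have "\<sigma> = (\<lambda>x. {x}) ` N" if singletons: "\<forall>A\<in>\<sigma>. \<forall>i\<in>A. A - {i} = {}"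
  proof (intro equalityI subsetI)
    fix A
    assume "A \<in> \<sigma>"
    moreover obtain i where "i \<in> A"
      using \<open>A \<in> \<sigma>\<close> partition_onD3[OF assms(1)] by fastforce
    ultimately have "A = {i}"
      using singletons by fastforce
    then show "A \<in> (\<lambda>x. {x}) ` N"
      using \<open>A \<in> \<sigma>\<close> \<open>i \<in> A\<close> partition_onD1[OF assms(1)] by blast
  next
    fix A
    assume "A \<in> (\<lambda>x. {x}) ` N"
    then obtain i B where "A = {i}" "B \<in> \<sigma>" "i \<in> B"
      using partition_onD1[OF assms(1)] by blast
    moreover have "B - {i} = {}"
      using singletons \<open>B \<in> \<sigma>\<close> \<open>i \<in> B\<close> by blast
    ultimately show "A \<in> \<sigma>"
      by (metis Diff_eq_empty_iff insert_absorb subset_singleton_iff)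
  qed
  then show thesis
    using assms(2) that by blast
qed

lemma split_off_player:
  assumes "partition_on N \<sigma>" "finite N" "A \<in> \<sigma>" "i \<in> A"
  shows "(A - {i}, \<sigma> - {A}) \<in> embedded (N - {i})"
    and "insert (A - {i} \<union> {i}) (\<sigma> - {A}) = \<sigma>"
    and "A - {i} \<noteq> {} \<Longrightarrow> card (insert (A - {i}) (add_to (\<sigma> - {A}) i {})) = Suc (card \<sigma>)"
proof -
  have "A \<subseteq> N"
    using assms(1,3) partition_onD1 by blast
  moreover have "N - {i} - (A - {i}) = N - A"
    using assms(4) by blast
  ultimately show "(A - {i}, \<sigma> - {A}) \<in> embedded (N - {i})"
    using partition_on_remove_block[OF assms(1,3)] by auto
  show "insert (A - {i} \<union> {i}) (\<sigma> - {A}) = \<sigma>"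
    using assms(3,4) by (simp add: insert_absorb)
  assume "A - {i} \<noteq> {}"
  have disj: "C \<inter> A = {}" if "C \<in> \<sigma> - {A}" for C
    using that assms(3) disjointD[OF partition_onD2[OF assms(1)]] by blast
  have "{i} \<notin> \<sigma> - {A}"
    using disj assms(4) by blast
  moreover have "A - {i} \<notin> \<sigma> - {A}"
    using disj \<open>A - {i} \<noteq> {}\<close> by blast
  moreover have "A - {i} \<noteq> {i}"
    by blast
  moreover have "finite \<sigma>"
    using assms(1,2) finite_elements by blast
  ultimately show "card (insert (A - {i}) (add_to (\<sigma> - {A}) i {})) = Suc (card \<sigma>)"
    using card_Suc_Diff1[OF \<open>finite \<sigma>\<close> assms(3)] by (simp add: add_to_def)
qed

lemma null_balanced_split_off:
  assumes "null_balanced p N" "partition_on N \<sigma>" "finite N" "A \<in> \<sigma>" "i \<in> A" "A - {i} \<noteq> {}"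
  shows "p N \<sigma> = card (A - {i}) / (card N - card (A - {i})) *
           (\<Sum>B\<in>insert {} (\<sigma> - {A}). p N (insert (A - {i}) (add_to (\<sigma> - {A}) i B)))"
proof -
  have "i \<in> N"
    using assms(2,4,5) partition_onD1 by blast
  then show ?thesis
    using null_balancedD[OF assms(1) _ split_off_player(1)[OF assms(2-5)] assms(6)]
    unfolding null_coeff_def split_off_player(2)[OF assms(2-5)] by simp
qed

lemma null_balanced_max_ratio_refine:
  assumes "finite N" "null_balanced p N" "partition_on N \<sigma>" "\<sigma> \<noteq> (\<lambda>x. {x}) ` N"
    and max: "\<And>\<sigma>'. partition_on N \<sigma>' \<Longrightarrow> p N \<sigma>' / ewens N \<sigma>' \<le> p N \<sigma> / ewens N \<sigma>"
  obtains \<sigma>' where "partition_on N \<sigma>'" "p N \<sigma>' / ewens N \<sigma>' = p N \<sigma> / ewens N \<sigma>"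
    "card \<sigma> < card \<sigma>'"
proof -
  define M where "M = p N \<sigma> / ewens N \<sigma>"
  obtain A i where A: "A \<in> \<sigma>" "i \<in> A" "A - {i} \<noteq> {}"
    using ex_block_with_two_players[OF assms(3,4)] .
  define T \<tau> where "T = A - {i}" and "\<tau> = \<sigma> - {A}"
  define g where "g B = insert T (add_to \<tau> i B)" for B
  define k where "k = real (card T) / (card N - card T)"
  have T\<tau>: "(T, \<tau>) \<in> embedded (N - {i})" and card: "card (g {}) = Suc (card \<sigma>)"
    using split_off_player[OF assms(3,1) A(1,2)] A(3) by (simp_all add: T_def \<tau>_def g_def)
  have "i \<in> N" "T \<noteq> {}"
    using A partition_onD1[OF assms(3)] by (auto simp: T_def)
  then have g: "partition_on N (g B)" if "B \<in> insert {} \<tau>" for B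
    unfolding g_def using partition_on_insert_add_to[OF T\<tau> _ _ that] by blast
  have "0 < card T" "card T < card N"
    using T\<tau> \<open>T \<noteq> {}\<close> \<open>finite N\<close> \<open>i \<in> N\<close> finite_subset[of T N]
    by (auto simp: card_gt_0_iff intro: psubset_card_mono)
  then have "0 < k"
    by (simp add: k_def)
  text \<open>Both \<open>p N \<sigma>\<close> and \<open>ewens N \<sigma>\<close> are the same positive combination of their values at the
    \<open>g B\<close>, so the ratio, being maximal at \<open>\<sigma>\<close>, is maximal at every \<open>g B\<close>.\<close>
  have "p N \<sigma> = k * (\<Sum>B\<in>insert {} \<tau>. p N (g B))" "ewens N \<sigma> = k * (\<Sum>B\<in>insert {} \<tau>. ewens N (g B))"
    using null_balanced_split_off[OF _ assms(3,1) A] assms(2) null_balanced_ewens[OF assms(1)]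
    by (simp_all add: T_def \<tau>_def g_def k_def)
  moreover have "p N \<sigma> = M * ewens N \<sigma>"
    using ewens_pos[of N \<sigma>] by (simp add: M_def)
  ultimately have "(\<Sum>B\<in>insert {} \<tau>. p N (g B)) = (\<Sum>B\<in>insert {} \<tau>. M * ewens N (g B))"
    using \<open>0 < k\<close> by (simp add: sum_distrib_left[symmetric])
  moreover have "p N (g B) \<le> M * ewens N (g B)" if "B \<in> insert {} \<tau>" for B
    using max[OF g[OF that]] ewens_pos[of N "g B"] by (simp add: M_def pos_divide_le_eq)
  moreover have "finite (insert {} \<tau>)"
    using T\<tau> \<open>finite N\<close> finite_elements[of "N - {i} - T" \<tau>] by simp
  ultimately have "p N (g {}) = M * ewens N (g {})"
    by (rule sum_mono_inv[OF _ _ insertI1])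
  then show thesis
    using that[of "g {}"] g[of "{}"] card ewens_pos[of N "g {}"] by (simp add: M_def)
qed

lemma null_balanced_ratio_le_singletons:
  assumes "finite N" "null_balanced p N" "partition_on N \<sigma>"
  shows "p N \<sigma> / ewens N \<sigma> \<le> p N ((\<lambda>x. {x}) ` N) / ewens N ((\<lambda>x. {x}) ` N)"
proof -
  define r where "r \<sigma> = p N \<sigma> / ewens N \<sigma>" for \<sigma>
  define M where "M = Max (r ` partitions N)"
  define maximisers where "maximisers = {\<sigma>'\<in>partitions N. r \<sigma>' = M}"
  have fin: "finite (partitions N)"
    using finite_partitions[OF assms(1)] .
  have le_M: "r \<sigma>' \<le> M" if "partition_on N \<sigma>'" for \<sigma>'
    using fin that by (simp add: M_def)
  have "M \<in> r ` partitions N"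
    using fin partition_on_singletons[of N] unfolding M_def by (intro Max_in) auto
  then have "card ` maximisers \<noteq> {}"
    by (auto simp: maximisers_def)
  have "finite (card ` maximisers)"
    unfolding maximisers_def by (intro finite_imageI finite_subset[OF _ fin]) auto
  then have "Max (card ` maximisers) \<in> card ` maximisers"
    using \<open>card ` maximisers \<noteq> {}\<close> by (rule Max_in)
  then obtain \<sigma>\<^sub>0 where "\<sigma>\<^sub>0 \<in> maximisers" and max_card: "Max (card ` maximisers) = card \<sigma>\<^sub>0"
    by blast
  then have \<sigma>\<^sub>0: "partition_on N \<sigma>\<^sub>0" "r \<sigma>\<^sub>0 = M"
    by (simp_all add: maximisers_def)
  have most_blocks: "card \<sigma>' \<le> card \<sigma>\<^sub>0" if "partition_on N \<sigma>'" "r \<sigma>' = M" for \<sigma>'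
    unfolding max_card[symmetric] using that \<open>finite (card ` maximisers)\<close>
    by (intro Max_ge) (simp_all add: maximisers_def)
  have "\<sigma>\<^sub>0 = (\<lambda>x. {x}) ` N"
  proof (rule ccontr)
    assume "\<sigma>\<^sub>0 \<noteq> (\<lambda>x. {x}) ` N"
    moreover have "p N \<sigma>' / ewens N \<sigma>' \<le> p N \<sigma>\<^sub>0 / ewens N \<sigma>\<^sub>0" if "partition_on N \<sigma>'" for \<sigma>'
      using le_M[OF that] \<sigma>\<^sub>0(2) by (simp add: r_def)
    ultimately obtain \<sigma>' where "partition_on N \<sigma>'" "r \<sigma>' = r \<sigma>\<^sub>0" "card \<sigma>\<^sub>0 < card \<sigma>'"
      using null_balanced_max_ratio_refine[OF assms(1,2) \<sigma>\<^sub>0(1)] unfolding r_def by blast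
    then show False
      using most_blocks \<sigma>\<^sub>0(2) by fastforce
  qed
  then show ?thesis
    using le_M[OF assms(3)] \<sigma>\<^sub>0(2) by (simp add: r_def)
qed

lemma null_balanced_uminus: "null_balanced p N \<Longrightarrow> null_balanced (\<lambda>N \<sigma>. - p N \<sigma>) N"
  by (simp add: null_balanced_def null_coeff_def sum_negf split_beta)

lemma null_balanced_eq_ewens:
  assumes "finite N" "null_balanced p N" "(\<Sum>\<sigma>\<in>partitions N. p N \<sigma>) = 1" "partition_on N \<sigma>"
  shows "p N \<sigma> = ewens N \<sigma>"
proof -
  define c where "c = p N ((\<lambda>x. {x}) ` N) / ewens N ((\<lambda>x. {x}) ` N)"
  text \<open>Applied to \<open>p\<close> and to \<open>-p\<close>, the maximum principle makes the ratio \<open>p / ewens\<close> constant.\<close>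
  have const: "p N \<sigma>' = c * ewens N \<sigma>'" if "partition_on N \<sigma>'" for \<sigma>'
    using null_balanced_ratio_le_singletons[OF assms(1,2) that]
      null_balanced_ratio_le_singletons[OF assms(1) null_balanced_uminus[OF assms(2)] that]
      ewens_pos[of N \<sigma>']
    by (simp add: c_def field_simps)
  have "1 = (\<Sum>\<sigma>'\<in>partitions N. c * ewens N \<sigma>')"
    using assms(3) const by simp
  also have "\<dots> = c"
    using sum_ewens[OF assms(1)] by (simp add: sum_distrib_left[symmetric])
  finally show ?thesis
    using const[OF assms(4)] by simp
qed

section \<open>The Ewens p-Shapley value is the MPW solution\<close>

lemma sum_embedded:
  assumes "finite X"
  shows "(\<Sum>(T, \<tau>)\<in>embedded X. f T \<tau>) = (\<Sum>T\<in>Pow X. \<Sum>\<tau>\<in>partitions (X - T). f T \<tau>)"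
proof -
  have "embedded X = (SIGMA T:Pow X. partitions (X - T))"
    by (auto simp: embedded_def)
  then show ?thesis
    by (simp only:) (rule sum.Sigma[symmetric]; use assms in \<open>auto intro!: finite_partitions\<close>)
qed

lemma sum_ewens_insert_player_block:
  assumes "finite N" "i \<in> N" "T \<subseteq> N - {i}"
  shows "(\<Sum>\<tau>\<in>partitions (N - {i} - T). ewens N (insert (T \<union> {i}) \<tau>) * g \<tau>) =
    fact (card T) * fact (card N - card T - 1) / fact (card N) *
    (\<Sum>\<tau>\<in>partitions (N - (T \<union> {i})). ewens (N - (T \<union> {i})) \<tau> * g \<tau>)"
proof -
  have "N - {i} - T = N - (T \<union> {i})" "T \<union> {i} \<subseteq> N"
    using assms(2,3) by auto
  moreover have "finite T" "i \<notin> T"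
    using assms finite_subset[of T N] by auto
  then have "card (T \<union> {i}) = Suc (card T)"
    by simp
  ultimately show ?thesis
    using ewens_insert_block[OF _ assms(1), of "T \<union> {i}"]
    by (simp add: sum_distrib_left mult.assoc)
qed

lemma sum_ewens_insert_add_to:
  assumes "finite N" "i \<in> N" "T \<subseteq> N - {i}" "T \<noteq> {}"
  shows "(\<Sum>\<tau>\<in>partitions (N - {i} - T). \<Sum>B\<in>insert {} \<tau>. ewens N (insert T (add_to \<tau> i B)) * g (add_to \<tau> i B)) =
    fact (card T - 1) * fact (card N - card T) / fact (card N) *
    (\<Sum>\<sigma>\<in>partitions (N - T). ewens (N - T) \<sigma> * g \<sigma>)"
proof -
  have "N - T = insert i (N - {i} - T)"
    using assms(2,3) by auto
  then have "(\<Sum>\<tau>\<in>partitions (N - {i} - T). \<Sum>B\<in>insert {} \<tau>. ewens N (insert T (add_to \<tau> i B)) * g (add_to \<tau> i B)) =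
      (\<Sum>\<sigma>\<in>partitions (N - T). ewens N (insert T \<sigma>) * g \<sigma>)"
    using sum_partitions_insert[of "N - {i} - T" i "\<lambda>\<sigma>. ewens N (insert T \<sigma>) * g \<sigma>"] assms(1) by simp
  also have "\<dots> = fact (card T - 1) * fact (card N - card T) / fact (card N) *
      (\<Sum>\<sigma>\<in>partitions (N - T). ewens (N - T) \<sigma> * g \<sigma>)"
    using ewens_insert_block[OF _ assms(1), of T] assms(3,4)
    by (auto simp: sum_distrib_left mult.assoc subset_Diff_insert intro!: sum.cong)
  finally show ?thesis .
qed

definition ewens_average_game :: "'a set \<Rightarrow> ('a set \<Rightarrow> 'a set set \<Rightarrow> real) \<Rightarrow> 'a set \<Rightarrow> real" where
  "ewens_average_game N w S = (\<Sum>\<pi>\<in>partitions (N - S). ewens (N - S) \<pi> * w S \<pi>)"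

lemma mpw_eq_shapley_ewens_average_game: "mpw N w i = shapley N (ewens_average_game N w) i"
  unfolding mpw_def ewens_average_game_def[abs_def] ..

lemma sum_p_shapley_ewens_summand:
  assumes "finite N" "i \<in> N" "tux_game N w" "T \<subseteq> N - {i}"
  shows "(\<Sum>\<tau>\<in>partitions (N - {i} - T).
            ewens N (insert (T \<union> {i}) \<tau>) * w (T \<union> {i}) \<tau> - card T / (card N - card T) *
            (\<Sum>B\<in>insert {} \<tau>. ewens N (insert T (add_to \<tau> i B)) * w T (add_to \<tau> i B)))
    = fact (card T) * fact (card N - card T - 1) / fact (card N) *
      (ewens_average_game N w (T \<union> {i}) - ewens_average_game N w T)"
    (is "?lhs = ?c * (?v (T \<union> {i}) - ?v T)")
proof -
  have "?lhs = ?c * ?v (T \<union> {i}) - card T / (card N - card T) *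
      (\<Sum>\<tau>\<in>partitions (N - {i} - T). \<Sum>B\<in>insert {} \<tau>. ewens N (insert T (add_to \<tau> i B)) * w T (add_to \<tau> i B))"
    unfolding sum_subtractf sum_distrib_left[symmetric] sum_ewens_insert_player_block[OF assms(1,2,4)]
    by (simp add: ewens_average_game_def)
  also have "\<dots> = ?c * (?v (T \<union> {i}) - ?v T)"
  proof (cases "T = {}")
    case True
    have "?v {} = 0"
      using assms(3) by (simp add: ewens_average_game_def tux_game_def)
    then show ?thesis
      using True by simp
  next
    case False
    have "0 < card T" "card T < card N"
      using False assms(1,2,4) finite_subset[of T N] by (auto simp: card_gt_0_iff intro: psubset_card_mono)
    have "card T / (card N - card T) * (fact (card T - 1) * fact (card N - card T) / fact (card N) * ?v T)
        = (card T / (card N - card T) * (fact (card T - 1) * fact (card N - card T))) / fact (card N) * ?v T"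
      by simp
    also have "\<dots> = ?c * ?v T"
      unfolding fact_pred_mult_fact_diff[OF \<open>0 < card T\<close> \<open>card T < card N\<close>] ..
    finally show ?thesis
      unfolding sum_ewens_insert_add_to[OF assms(1,2,4) False] ewens_average_game_def[symmetric]
      by (simp add: right_diff_distrib)
  qed
  finally show ?thesis .
qed

lemma p_shapley_ewens_eq_mpw:
  assumes "finite N" "i \<in> N" "tux_game N w"
  shows "p_shapley ewens N w i = mpw N w i"
  using assms sum_p_shapley_ewens_summand[OF assms]
  by (simp add: p_shapley_def sum_embedded mpw_eq_shapley_ewens_average_game shapley_def mult.commute)

lemma null_player_property_transfer:
  assumes "null_player_property U \<phi>"
    and "\<And>N w i. N \<subseteq> U \<Longrightarrow> tux_game N w \<Longrightarrow> i \<in> N \<Longrightarrow> \<phi> N w i = \<psi> N w i"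
  shows "null_player_property U \<psi>"
  unfolding null_player_property_def
proof (intro allI impI, elim conjE)
  fix N w i
  assume "N \<subseteq> U" "tux_game N w" "i \<in> N" "null_player N w i"
  then show "\<psi> N w i = 0"
    using assms(1) assms(2)[symmetric] unfolding null_player_property_def by simp
qed

lemma null_player_property_ewens:
  assumes "finite U"
  shows "null_player_property U (p_shapley ewens)"
  using assms by (intro null_player_property_if_null_balanced null_balanced_ewens) (rule finite_subset)

lemma null_player_property_iff_ewens:
  assumes "finite U" "random_partition U p"
  shows "null_player_property U (p_shapley p) \<longleftrightarrow> (\<forall>N \<subseteq> U. \<forall>\<pi>\<in>partitions N. p N \<pi> = ewens N \<pi>)"
proof
  assume npp: "null_player_property U (p_shapley p)"
  show "\<forall>N \<subseteq> U. \<forall>\<pi>\<in>partitions N. p N \<pi> = ewens N \<pi>"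
  proof (intro allI impI ballI)
    fix N \<pi>
    assume "N \<subseteq> U" "\<pi> \<in> partitions N"
    have "finite N"
      using \<open>N \<subseteq> U\<close> assms(1) finite_subset by blast
    moreover have "(\<Sum>\<sigma>\<in>partitions N. p N \<sigma>) = 1"
      using assms(2) \<open>N \<subseteq> U\<close> by (simp add: random_partition_def)
    ultimately show "p N \<pi> = ewens N \<pi>"
      using null_balanced_if_null_player_property[OF npp \<open>N \<subseteq> U\<close>] \<open>\<pi> \<in> partitions N\<close>
      by (intro null_balanced_eq_ewens) simp_all
  qed
next
  assume ewens: "\<forall>N \<subseteq> U. \<forall>\<pi>\<in>partitions N. p N \<pi> = ewens N \<pi>"
  show "null_player_property U (p_shapley p)"
  proof (rule null_player_property_transfer[OF null_player_property_ewens[OF assms(1)]])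
    fix N w i
    assume "N \<subseteq> U" "tux_game N w" "i \<in> N"
    show "p_shapley ewens N w i = p_shapley p N w i"
      by (rule p_shapley_cong[OF \<open>i \<in> N\<close>]) (use ewens \<open>N \<subseteq> U\<close> in auto)
  qed
qed

lemma p_shapley_eq_mpw_iff_ewens:
  assumes "finite U" "random_partition U p"
  shows "(\<forall>N w i. N \<subseteq> U \<and> tux_game N w \<and> i \<in> N \<longrightarrow> p_shapley p N w i = mpw N w i) \<longleftrightarrow>
           (\<forall>N \<subseteq> U. \<forall>\<pi>\<in>partitions N. p N \<pi> = ewens N \<pi>)"
    (is "?mpw \<longleftrightarrow> ?ewens")
proof
  have mpw: "p_shapley ewens N w i = mpw N w i" if "N \<subseteq> U" "tux_game N w" "i \<in> N" for N w i
    using p_shapley_ewens_eq_mpw[OF finite_subset[OF that(1) assms(1)] that(3,2)] .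
  show ?mpw if ?ewens
  proof (intro allI impI, elim conjE)
    fix N w i
    assume "N \<subseteq> U" "tux_game N w" "i \<in> N"
    then have "p_shapley p N w i = p_shapley ewens N w i"
      by (intro p_shapley_cong) (use \<open>?ewens\<close> in auto)
    then show "p_shapley p N w i = mpw N w i"
      using mpw \<open>N \<subseteq> U\<close> \<open>tux_game N w\<close> \<open>i \<in> N\<close> by simp
  qed
  show ?ewens if ?mpw
  proof -
    have "null_player_property U (p_shapley p)"
    proof (rule null_player_property_transfer[OF null_player_property_ewens[OF assms(1)]])
      fix N w i
      assume "N \<subseteq> U" "tux_game N w" "i \<in> N"
      then show "p_shapley ewens N w i = p_shapley p N w i"
        using mpw \<open>?mpw\<close> by simp
    qed
    then show ?thesis
      using null_player_property_iff_ewens[OF assms] by blast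
  qed
qed

theorem proposition2:
  fixes U :: "'a set" and p :: "'a set \<Rightarrow> 'a set set \<Rightarrow> real"
  assumes "finite U"
    and "random_partition U p"
  shows "(null_player_property U (p_shapley p) \<longleftrightarrow>
            (\<forall>N \<subseteq> U. \<forall>\<pi>\<in>partitions N. p N \<pi> = ewens N \<pi>))
       \<and> ((\<forall>N \<subseteq> U. \<forall>\<pi>\<in>partitions N. p N \<pi> = ewens N \<pi>) \<longleftrightarrow>
            (\<forall>N w i. N \<subseteq> U \<and> tux_game N w \<and> i \<in> N \<longrightarrow> p_shapley p N w i = mpw N w i))"
  using null_player_property_iff_ewens[OF assms] p_shapley_eq_mpw_iff_ewens[OF assms] by blast

end
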